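(* Let $\mathcal{T}$ be a K3 category and $E\in\mathcal{T}$ a spherical object. Define objects $E_n$ inductively by $E_1:=E$ and, given $E_n$, letting $E_{n+1}$ be defined by a distinguished triangle $E_{n+1}\to E\to E_n[2]\to E_{n+1}[1]$ whose middle map is a nonzero morphism $E\to E_n[2]$. Then $\mathrm{Hom}(E,E_n[2])$ is one-dimensional for every $n\ge1$ (so the construction is well defined up to isomorphism), and for all positive integers $m\le n$ one has $(E_m,E_n)^i=1$ if $i\in\{-n+1,\dots,-n+m\}$, $(E_m,E_n)^i=1$ if $i\in\{2,\dots,m+1\}$, and $(E_m,E_n)^i=0$ otherwise.
   Context: All categories are linear over a field $k$ of characteristic $\neq 2$ and of finite type. A K3 category is such a triangulated category in which $E\mapsto E[2]$ is a Serre functor ($\mathrm{Hom}(E,F)\cong\mathrm{Hom}(F,E[2])^*$ functorially). Write $(E,F)^i=\dim_k\mathrm{Hom}(E,F[i])$. An object $E$ is spherical if $(E,E)^0=(E,E)^2=1$ and $(E,E)^i=0$ for $i\neq0,2$. *)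

theory Defs
  imports Main
begin

section \<open>k-linear categories (morphisms in a global type, Hom-sets as carriers)\<close>

record ('o, 'm, 'k) kcat =
  Ob    :: "'o set"
  Hom   :: "'o \<Rightarrow> 'o \<Rightarrow> 'm set"
  cmp   :: "'m \<Rightarrow> 'm \<Rightarrow> 'm"        (* cmp g f = g o f *)
  idm   :: "'o \<Rightarrow> 'm"
  addm  :: "'m \<Rightarrow> 'm \<Rightarrow> 'm"
  smul  :: "'k \<Rightarrow> 'm \<Rightarrow> 'm"
  zerom :: "'o \<Rightarrow> 'o \<Rightarrow> 'm"
  shO   :: "'o \<Rightarrow> 'o"               (* shift functor on objects, E \<mapsto> E[1] *)
  shM   :: "'m \<Rightarrow> 'm"
  dist  :: "('o \<times> 'o \<times> 'o \<times> 'm \<times> 'm \<times> 'm) set"  (* distinguished triangles A -f-> B -g-> C -h-> A[1] *)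

definition category :: "('o,'m,'k) kcat \<Rightarrow> bool" where
  "category C \<longleftrightarrow>
     (\<forall>A\<in>Ob C. idm C A \<in> Hom C A A) \<and>
     (\<forall>A\<in>Ob C. \<forall>B\<in>Ob C. \<forall>D\<in>Ob C. \<forall>f\<in>Hom C A B. \<forall>g\<in>Hom C B D. cmp C g f \<in> Hom C A D) \<and>
     (\<forall>A\<in>Ob C. \<forall>B\<in>Ob C. \<forall>f\<in>Hom C A B. cmp C f (idm C A) = f \<and> cmp C (idm C B) f = f) \<and>
     (\<forall>A\<in>Ob C. \<forall>B\<in>Ob C. \<forall>D\<in>Ob C. \<forall>F\<in>Ob C. \<forall>f\<in>Hom C A B. \<forall>g\<in>Hom C B D. \<forall>h\<in>Hom C D F.
         cmp C h (cmp C g f) = cmp C (cmp C h g) f)"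

definition klinear :: "('o,'m,'k::field) kcat \<Rightarrow> bool" where
  "klinear C \<longleftrightarrow> category C \<and>
     (\<forall>A\<in>Ob C. \<forall>B\<in>Ob C.
        zerom C A B \<in> Hom C A B \<and>
        (\<forall>f\<in>Hom C A B. \<forall>g\<in>Hom C A B. addm C f g \<in> Hom C A B) \<and>
        (\<forall>c. \<forall>f\<in>Hom C A B. smul C c f \<in> Hom C A B) \<and>
        (\<forall>f\<in>Hom C A B. \<forall>g\<in>Hom C A B. \<forall>h\<in>Hom C A B. addm C (addm C f g) h = addm C f (addm C g h)) \<and>
        (\<forall>f\<in>Hom C A B. \<forall>g\<in>Hom C A B. addm C f g = addm C g f) \<and>
        (\<forall>f\<in>Hom C A B. addm C (zerom C A B) f = f) \<and>
        (\<forall>f\<in>Hom C A B. \<exists>g\<in>Hom C A B. addm C f g = zerom C A B) \<and>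
        (\<forall>c. \<forall>f\<in>Hom C A B. \<forall>g\<in>Hom C A B. smul C c (addm C f g) = addm C (smul C c f) (smul C c g)) \<and>
        (\<forall>a b. \<forall>f\<in>Hom C A B. smul C (a + b) f = addm C (smul C a f) (smul C b f)) \<and>
        (\<forall>a b. \<forall>f\<in>Hom C A B. smul C (a * b) f = smul C a (smul C b f)) \<and>
        (\<forall>f\<in>Hom C A B. smul C 1 f = f)) \<and>
     (\<forall>A\<in>Ob C. \<forall>B\<in>Ob C. \<forall>D\<in>Ob C. \<forall>f\<in>Hom C A B. \<forall>f'\<in>Hom C A B. \<forall>g\<in>Hom C B D. \<forall>g'\<in>Hom C B D. \<forall>c.
        cmp C g (addm C f f') = addm C (cmp C g f) (cmp C g f') \<and>
        cmp C (addm C g g') f = addm C (cmp C g f) (cmp C g' f) \<and>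
        cmp C g (smul C c f) = smul C c (cmp C g f) \<and>
        cmp C (smul C c g) f = smul C c (cmp C g f))"

fun lincomb :: "('o,'m,'k) kcat \<Rightarrow> 'o \<Rightarrow> 'o \<Rightarrow> ('k \<times> 'm) list \<Rightarrow> 'm" where
  "lincomb C A B [] = zerom C A B"
| "lincomb C A B ((c, v) # xs) = addm C (smul C c v) (lincomb C A B xs)"

definition spans :: "('o,'m,'k) kcat \<Rightarrow> 'o \<Rightarrow> 'o \<Rightarrow> 'm list \<Rightarrow> bool" where
  "spans C A B vs \<longleftrightarrow> set vs \<subseteq> Hom C A B \<and>
     Hom C A B \<subseteq> {lincomb C A B (zip cs vs) | cs. length cs = length vs}"

definition hdim :: "('o,'m,'k) kcat \<Rightarrow> 'o \<Rightarrow> 'o \<Rightarrow> nat" where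
  "hdim C A B = (LEAST n. \<exists>vs. length vs = n \<and> spans C A B vs)"

definition iso_obj :: "('o,'m,'k) kcat \<Rightarrow> 'o \<Rightarrow> 'o \<Rightarrow> bool" where
  "iso_obj C A B \<longleftrightarrow> (\<exists>f\<in>Hom C A B. \<exists>g\<in>Hom C B A. cmp C g f = idm C A \<and> cmp C f g = idm C B)"

definition is_iso :: "('o,'m,'k) kcat \<Rightarrow> 'o \<Rightarrow> 'o \<Rightarrow> 'm \<Rightarrow> bool" where
  "is_iso C A B f \<longleftrightarrow> f \<in> Hom C A B \<and> (\<exists>g\<in>Hom C B A. cmp C g f = idm C A \<and> cmp C f g = idm C B)"

definition additive :: "('o,'m,'k::field) kcat \<Rightarrow> bool" where
  "additive C \<longleftrightarrow> klinear C \<and>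
     (\<exists>Z\<in>Ob C. \<forall>A\<in>Ob C. Hom C Z A = {zerom C Z A} \<and> Hom C A Z = {zerom C A Z}) \<and>
     (\<forall>A\<in>Ob C. \<forall>B\<in>Ob C. \<exists>S\<in>Ob C. \<exists>i1\<in>Hom C A S. \<exists>i2\<in>Hom C B S. \<exists>p1\<in>Hom C S A. \<exists>p2\<in>Hom C S B.
        cmp C p1 i1 = idm C A \<and> cmp C p2 i2 = idm C B \<and>
        cmp C p1 i2 = zerom C B A \<and> cmp C p2 i1 = zerom C A B \<and>
        addm C (cmp C i1 p1) (cmp C i2 p2) = idm C S)"

definition shift_equiv :: "('o,'m,'k::field) kcat \<Rightarrow> bool" where
  "shift_equiv C \<longleftrightarrow>
     (\<forall>A\<in>Ob C. shO C A \<in> Ob C) \<and>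
     (\<forall>A\<in>Ob C. \<forall>B\<in>Ob C. \<forall>f\<in>Hom C A B. shM C f \<in> Hom C (shO C A) (shO C B)) \<and>
     (\<forall>A\<in>Ob C. shM C (idm C A) = idm C (shO C A)) \<and>
     (\<forall>A\<in>Ob C. \<forall>B\<in>Ob C. \<forall>D\<in>Ob C. \<forall>f\<in>Hom C A B. \<forall>g\<in>Hom C B D. shM C (cmp C g f) = cmp C (shM C g) (shM C f)) \<and>
     (\<forall>A\<in>Ob C. \<forall>B\<in>Ob C. \<forall>f\<in>Hom C A B. \<forall>g\<in>Hom C A B. \<forall>c.
        shM C (addm C f g) = addm C (shM C f) (shM C g) \<and> shM C (smul C c f) = smul C c (shM C f)) \<and>
     (\<forall>A\<in>Ob C. \<forall>B\<in>Ob C. bij_betw (shM C) (Hom C A B) (Hom C (shO C A) (shO C B))) \<and>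
     (\<forall>B\<in>Ob C. \<exists>A\<in>Ob C. iso_obj C (shO C A) B)"

type_synonym ('o, 'm) triangle = "'o \<times> 'o \<times> 'o \<times> 'm \<times> 'm \<times> 'm"

definition tri_wf :: "('o,'m,'k) kcat \<Rightarrow> ('o,'m) triangle \<Rightarrow> bool" where
  "tri_wf C T \<longleftrightarrow> (case T of (A, B, D, f, g, h) \<Rightarrow>
     A \<in> Ob C \<and> B \<in> Ob C \<and> D \<in> Ob C \<and> f \<in> Hom C A B \<and> g \<in> Hom C B D \<and> h \<in> Hom C D (shO C A))"

definition triangulated :: "('o,'m,'k::field) kcat \<Rightarrow> bool" where
  "triangulated C \<longleftrightarrow> additive C \<and> shift_equiv C \<and>
     (\<forall>T\<in>dist C. tri_wf C T) \<and>
     \<comment> \<open>TR1: closed under isomorphisms of triangles\<close>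
     (\<forall>A B D f g h A' B' D' f' g' h' a b c.
        (A, B, D, f, g, h) \<in> dist C \<and> tri_wf C (A', B', D', f', g', h') \<and>
        is_iso C A A' a \<and> is_iso C B B' b \<and> is_iso C D D' c \<and>
        cmp C b f = cmp C f' a \<and> cmp C c g = cmp C g' b \<and> cmp C (shM C a) h = cmp C h' c
        \<longrightarrow> (A', B', D', f', g', h') \<in> dist C) \<and>
     \<comment> \<open>TR1: A -id-> A -> 0 -> A[1] is distinguished for a zero object 0\<close>
     (\<forall>A\<in>Ob C. \<forall>Z\<in>Ob C. (\<forall>X\<in>Ob C. Hom C Z X = {zerom C Z X} \<and> Hom C X Z = {zerom C X Z}) \<longrightarrow>
        (A, A, Z, idm C A, zerom C A Z, zerom C Z (shO C A)) \<in> dist C) \<and>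
     \<comment> \<open>TR1: every morphism extends to a distinguished triangle\<close>
     (\<forall>A\<in>Ob C. \<forall>B\<in>Ob C. \<forall>f\<in>Hom C A B. \<exists>D g h. (A, B, D, f, g, h) \<in> dist C) \<and>
     \<comment> \<open>TR2: rotation\<close>
     (\<forall>A B D f g h. tri_wf C (A, B, D, f, g, h) \<longrightarrow>
        ((A, B, D, f, g, h) \<in> dist C \<longleftrightarrow> (B, D, shO C A, g, h, smul C (-1) (shM C f)) \<in> dist C)) \<and>
     \<comment> \<open>TR3: completion of morphisms of triangles\<close>
     (\<forall>A B D f g h A' B' D' f' g' h' a b.
        (A, B, D, f, g, h) \<in> dist C \<and> (A', B', D', f', g', h') \<in> dist C \<and>
        a \<in> Hom C A A' \<and> b \<in> Hom C B B' \<and> cmp C b f = cmp C f' a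
        \<longrightarrow> (\<exists>c\<in>Hom C D D'. cmp C c g = cmp C g' b \<and> cmp C (shM C a) h = cmp C h' c)) \<and>
     \<comment> \<open>TR4: octahedral axiom\<close>
     (\<forall>X Y Z Z' X' Y' u j k v l i m n.
        (X, Y, Z', u, j, k) \<in> dist C \<and> (Y, Z, X', v, l, i) \<in> dist C \<and>
        (X, Z, Y', cmp C v u, m, n) \<in> dist C
        \<longrightarrow> (\<exists>p q. (Z', Y', X', p, q, cmp C (shM C j) i) \<in> dist C \<and>
               cmp C p j = cmp C m v \<and> cmp C n p = k \<and>
               cmp C q m = l \<and> cmp C i q = cmp C (shM C u) n))"

definition finite_type :: "('o,'m,'k::field) kcat \<Rightarrow> bool" where
  "finite_type C \<longleftrightarrow> (\<forall>A\<in>Ob C. \<forall>B\<in>Ob C.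
     (\<forall>i. \<exists>vs. spans C A ((shO C ^^ i) B) vs) \<and>
     (\<forall>i. \<exists>vs. spans C ((shO C ^^ i) A) B vs) \<and>
     finite {i. Hom C A ((shO C ^^ i) B) \<noteq> {zerom C A ((shO C ^^ i) B)}} \<and>
     finite {i. Hom C ((shO C ^^ i) A) B \<noteq> {zerom C ((shO C ^^ i) A) B}})"

abbreviation sh2 :: "('o,'m,'k) kcat \<Rightarrow> 'o \<Rightarrow> 'o" where
  "sh2 C A \<equiv> shO C (shO C A)"

abbreviation shM2 :: "('o,'m,'k) kcat \<Rightarrow> 'm \<Rightarrow> 'm" where
  "shM2 C f \<equiv> shM C (shM C f)"

text \<open>E \<mapsto> E[2] is a Serre functor: natural isomorphisms
  eta_{E,F} : Hom(E,F) \<rightarrow> Hom(F,E[2])^*, written as pairings P E F f g = eta_{E,F}(f)(g).\<close>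
definition serre_shift2 :: "('o,'m,'k::field) kcat \<Rightarrow> bool" where
  "serre_shift2 C \<longleftrightarrow> (\<exists>P :: 'o \<Rightarrow> 'o \<Rightarrow> 'm \<Rightarrow> 'm \<Rightarrow> 'k.
     (\<forall>E\<in>Ob C. \<forall>F\<in>Ob C.
        \<comment> \<open>eta_{E,F}(f) is linear\<close>
        (\<forall>f\<in>Hom C E F. \<forall>g\<in>Hom C F (sh2 C E). \<forall>g'\<in>Hom C F (sh2 C E). \<forall>c.
            P E F f (addm C g g') = P E F f g + P E F f g' \<and> P E F f (smul C c g) = c * P E F f g) \<and>
        \<comment> \<open>eta_{E,F} is linear\<close>
        (\<forall>f\<in>Hom C E F. \<forall>f'\<in>Hom C E F. \<forall>g\<in>Hom C F (sh2 C E). \<forall>c.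
            P E F (addm C f f') g = P E F f g + P E F f' g \<and> P E F (smul C c f) g = c * P E F f g) \<and>
        \<comment> \<open>eta_{E,F} is injective\<close>
        (\<forall>f\<in>Hom C E F. \<forall>f'\<in>Hom C E F. (\<forall>g\<in>Hom C F (sh2 C E). P E F f g = P E F f' g) \<longrightarrow> f = f') \<and>
        \<comment> \<open>eta_{E,F} is surjective onto the dual space\<close>
        (\<forall>\<phi> :: 'm \<Rightarrow> 'k.
            (\<forall>g\<in>Hom C F (sh2 C E). \<forall>g'\<in>Hom C F (sh2 C E). \<forall>c.
               \<phi> (addm C g g') = \<phi> g + \<phi> g' \<and> \<phi> (smul C c g) = c * \<phi> g)
            \<longrightarrow> (\<exists>f\<in>Hom C E F. \<forall>g\<in>Hom C F (sh2 C E). P E F f g = \<phi> g))) \<and>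
     \<comment> \<open>naturality in E (contravariant) and F (covariant)\<close>
     (\<forall>E\<in>Ob C. \<forall>E'\<in>Ob C. \<forall>F\<in>Ob C. \<forall>F'\<in>Ob C. \<forall>a\<in>Hom C E' E. \<forall>b\<in>Hom C F F'.
        \<forall>f\<in>Hom C E F. \<forall>g\<in>Hom C F' (sh2 C E').
          P E' F' (cmp C b (cmp C f a)) g = P E F f (cmp C (shM2 C a) (cmp C g b))))"

definition K3_category :: "('o,'m,'k::field) kcat \<Rightarrow> bool" where
  "K3_category C \<longleftrightarrow> triangulated C \<and> finite_type C \<and> serre_shift2 C"

text \<open>(E,F)^i = dim Hom(E, F[i]); for negative i this is dim Hom(E[-i], F),
  which is canonically isomorphic since the shift is an equivalence.\<close>
definition ext_dim :: "('o,'m,'k) kcat \<Rightarrow> 'o \<Rightarrow> 'o \<Rightarrow> int \<Rightarrow> nat" where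
  "ext_dim C E F i = (if 0 \<le> i then hdim C E ((shO C ^^ nat i) F)
                      else hdim C ((shO C ^^ nat (- i)) E) F)"

definition spherical :: "('o,'m,'k) kcat \<Rightarrow> 'o \<Rightarrow> bool" where
  "spherical C E \<longleftrightarrow> E \<in> Ob C \<and> ext_dim C E E 0 = 1 \<and> ext_dim C E E 2 = 1 \<and>
     (\<forall>i. i \<noteq> 0 \<and> i \<noteq> 2 \<longrightarrow> ext_dim C E E i = 0)"

end

theory Submission
  imports Defs
begin

text \<open>Every Hom space that occurs has dimension 0 or 1, so it suffices to record which of them
  vanish. The triangle E_(n+1) -> E -> E_n[2] -> E_(n+1)[1] gives long exact sequences for
  Hom(E, -) and Hom(-, E_n). By induction on n, (E, E_n)^i is nonzero only for i = 1 - n, 2;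
  together with (E, E)^i this leaves in each degree at most one nonzero neighbour of
  (E, E_(n+1))^i, except in degrees 0 and 1, where composition with the nonzero map E -> E_n[2]
  is an isomorphism of lines Hom(E, E) -> Hom(E, E_n[2]). The same bookkeeping along
  Hom(-, E_n), by induction on m, computes (E_m, E_n)^i.\<close>

section \<open>Linear structure\<close>

locale triangulated_cat =
  fixes C :: "('o, 'm, 'k::field) kcat"
  assumes triangulated: "triangulated C"
begin

lemma klinear: "klinear C"
  using triangulated unfolding triangulated_def additive_def by blast

lemma category: "category C"
  using klinear unfolding klinear_def by blast

lemma shift_equiv: "shift_equiv C"
  using triangulated unfolding triangulated_def by blast

lemma idm_closed: "A \<in> Ob C \<Longrightarrow> idm C A \<in> Hom C A A"
  using category unfolding category_def by blast

lemma cmp_closed: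
  "\<lbrakk>A \<in> Ob C; B \<in> Ob C; D \<in> Ob C; f \<in> Hom C A B; g \<in> Hom C B D\<rbrakk> \<Longrightarrow> cmp C g f \<in> Hom C A D"
  using category unfolding category_def by blast

lemma cmp_idm_right: "\<lbrakk>A \<in> Ob C; B \<in> Ob C; f \<in> Hom C A B\<rbrakk> \<Longrightarrow> cmp C f (idm C A) = f"
  using category unfolding category_def by blast

lemma cmp_idm_left: "\<lbrakk>A \<in> Ob C; B \<in> Ob C; f \<in> Hom C A B\<rbrakk> \<Longrightarrow> cmp C (idm C B) f = f"
  using category unfolding category_def by blast

lemma cmp_assoc:
  "\<lbrakk>A \<in> Ob C; B \<in> Ob C; D \<in> Ob C; F \<in> Ob C; f \<in> Hom C A B; g \<in> Hom C B D; h \<in> Hom C D F\<rbrakk>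
   \<Longrightarrow> cmp C h (cmp C g f) = cmp C (cmp C h g) f"
  using category unfolding category_def by blast

context
  fixes A B
  assumes A: "A \<in> Ob C" and B: "B \<in> Ob C"
begin

lemma Hom_vector_space:
  "zerom C A B \<in> Hom C A B \<and>
   (\<forall>f\<in>Hom C A B. \<forall>g\<in>Hom C A B. addm C f g \<in> Hom C A B) \<and>
   (\<forall>c. \<forall>f\<in>Hom C A B. smul C c f \<in> Hom C A B) \<and>
   (\<forall>f\<in>Hom C A B. \<forall>g\<in>Hom C A B. \<forall>h\<in>Hom C A B. addm C (addm C f g) h = addm C f (addm C g h)) \<and>
   (\<forall>f\<in>Hom C A B. \<forall>g\<in>Hom C A B. addm C f g = addm C g f) \<and>
   (\<forall>f\<in>Hom C A B. addm C (zerom C A B) f = f) \<and>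
   (\<forall>f\<in>Hom C A B. \<exists>g\<in>Hom C A B. addm C f g = zerom C A B) \<and>
   (\<forall>c. \<forall>f\<in>Hom C A B. \<forall>g\<in>Hom C A B. smul C c (addm C f g) = addm C (smul C c f) (smul C c g)) \<and>
   (\<forall>a b. \<forall>f\<in>Hom C A B. smul C (a + b) f = addm C (smul C a f) (smul C b f)) \<and>
   (\<forall>a b. \<forall>f\<in>Hom C A B. smul C (a * b) f = smul C a (smul C b f)) \<and>
   (\<forall>f\<in>Hom C A B. smul C 1 f = f)"
proof -
  have "\<forall>A\<in>Ob C. \<forall>B\<in>Ob C. zerom C A B \<in> Hom C A B \<and>
   (\<forall>f\<in>Hom C A B. \<forall>g\<in>Hom C A B. addm C f g \<in> Hom C A B) \<and>
   (\<forall>c. \<forall>f\<in>Hom C A B. smul C c f \<in> Hom C A B) \<and>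
   (\<forall>f\<in>Hom C A B. \<forall>g\<in>Hom C A B. \<forall>h\<in>Hom C A B. addm C (addm C f g) h = addm C f (addm C g h)) \<and>
   (\<forall>f\<in>Hom C A B. \<forall>g\<in>Hom C A B. addm C f g = addm C g f) \<and>
   (\<forall>f\<in>Hom C A B. addm C (zerom C A B) f = f) \<and>
   (\<forall>f\<in>Hom C A B. \<exists>g\<in>Hom C A B. addm C f g = zerom C A B) \<and>
   (\<forall>c. \<forall>f\<in>Hom C A B. \<forall>g\<in>Hom C A B. smul C c (addm C f g) = addm C (smul C c f) (smul C c g)) \<and>
   (\<forall>a b. \<forall>f\<in>Hom C A B. smul C (a + b) f = addm C (smul C a f) (smul C b f)) \<and>
   (\<forall>a b. \<forall>f\<in>Hom C A B. smul C (a * b) f = smul C a (smul C b f)) \<and>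
   (\<forall>f\<in>Hom C A B. smul C 1 f = f)"
    using klinear unfolding klinear_def by (elim conjE)
  from bspec[OF bspec[OF this A] B] show ?thesis .
qed

lemma zerom_closed: "zerom C A B \<in> Hom C A B"
  using Hom_vector_space by auto

lemma addm_closed: "\<lbrakk>f \<in> Hom C A B; g \<in> Hom C A B\<rbrakk> \<Longrightarrow> addm C f g \<in> Hom C A B"
  using Hom_vector_space by auto

lemma smul_closed: "f \<in> Hom C A B \<Longrightarrow> smul C c f \<in> Hom C A B"
  using Hom_vector_space by auto

lemma addm_assoc:
  "\<lbrakk>f \<in> Hom C A B; g \<in> Hom C A B; h \<in> Hom C A B\<rbrakk> \<Longrightarrow> addm C (addm C f g) h = addm C f (addm C g h)"
  using Hom_vector_space by auto

lemma addm_comm: "\<lbrakk>f \<in> Hom C A B; g \<in> Hom C A B\<rbrakk> \<Longrightarrow> addm C f g = addm C g f"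
  using Hom_vector_space by auto

lemma zerom_addm: "f \<in> Hom C A B \<Longrightarrow> addm C (zerom C A B) f = f"
  using Hom_vector_space by auto

lemma addm_inverse: "f \<in> Hom C A B \<Longrightarrow> \<exists>g\<in>Hom C A B. addm C f g = zerom C A B"
  using Hom_vector_space by (elim conjE) blast

lemma smul_addm:
  "\<lbrakk>f \<in> Hom C A B; g \<in> Hom C A B\<rbrakk> \<Longrightarrow> smul C c (addm C f g) = addm C (smul C c f) (smul C c g)"
  using Hom_vector_space by auto

lemma smul_add: "f \<in> Hom C A B \<Longrightarrow> smul C (a + b) f = addm C (smul C a f) (smul C b f)"
  using Hom_vector_space by auto

lemma smul_mult: "f \<in> Hom C A B \<Longrightarrow> smul C (a * b) f = smul C a (smul C b f)"
  using Hom_vector_space by auto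

lemma smul_one: "f \<in> Hom C A B \<Longrightarrow> smul C 1 f = f"
  using Hom_vector_space by auto

lemma addm_zerom: "f \<in> Hom C A B \<Longrightarrow> addm C f (zerom C A B) = f"
  using addm_comm zerom_addm zerom_closed by metis

lemma addm_idem_zerom:
  assumes x: "x \<in> Hom C A B" and idem: "addm C x x = x"
  shows "x = zerom C A B"
proof -
  obtain y where y: "y \<in> Hom C A B" "addm C x y = zerom C A B"
    using addm_inverse x by blast
  have "zerom C A B = addm C (addm C x x) y" using idem y by simp
  also have "\<dots> = addm C x (addm C x y)" using addm_assoc x y by blast
  also have "\<dots> = x" using y addm_zerom x by simp
  finally show ?thesis by simp
qed

lemma smul_zero: "f \<in> Hom C A B \<Longrightarrow> smul C 0 f = zerom C A B"
  by (metis add_0 smul_add addm_idem_zerom smul_closed)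

lemma smul_zerom: "smul C c (zerom C A B) = zerom C A B"
  by (metis zerom_closed zerom_addm smul_addm addm_idem_zerom smul_closed)

lemma addm_neg: "f \<in> Hom C A B \<Longrightarrow> addm C f (smul C (-1) f) = zerom C A B"
  by (metis smul_one smul_add add.right_inverse smul_zero)

lemma eq_of_addm_neg:
  assumes x: "x \<in> Hom C A B" and y: "y \<in> Hom C A B"
    and diff: "addm C x (smul C (-1) y) = zerom C A B"
  shows "x = y"
proof -
  have "y = addm C (addm C x (smul C (-1) y)) y" using diff zerom_addm y by simp
  also have "\<dots> = addm C x (addm C (smul C (-1) y) y)" using addm_assoc x y smul_closed by blast
  also have "\<dots> = x" using addm_comm addm_neg addm_zerom x y smul_closed by metis
  finally show ?thesis by simp
qed

lemma smul_cancel: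
  assumes "x \<in> Hom C A B" "y \<in> Hom C A B" "c \<noteq> 0" "smul C c x = smul C c y"
  shows "x = y"
  by (metis assms smul_mult smul_one field_class.field_inverse)

lemma smul_eq_zerom_iff: "f \<in> Hom C A B \<Longrightarrow> smul C c f = zerom C A B \<longleftrightarrow> c = 0 \<or> f = zerom C A B"
  by (metis smul_cancel smul_zero smul_zerom zerom_closed)

end

lemma cmp_bilinear:
  assumes "A \<in> Ob C" "B \<in> Ob C" "D \<in> Ob C" "f \<in> Hom C A B" "f' \<in> Hom C A B"
    "g \<in> Hom C B D" "g' \<in> Hom C B D"
  shows "cmp C g (addm C f f') = addm C (cmp C g f) (cmp C g f') \<and>
    cmp C (addm C g g') f = addm C (cmp C g f) (cmp C g' f) \<and>
    cmp C g (smul C c f) = smul C c (cmp C g f) \<and>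
    cmp C (smul C c g) f = smul C c (cmp C g f)"
proof -
  have "\<forall>A\<in>Ob C. \<forall>B\<in>Ob C. \<forall>D\<in>Ob C. \<forall>f\<in>Hom C A B. \<forall>f'\<in>Hom C A B. \<forall>g\<in>Hom C B D. \<forall>g'\<in>Hom C B D. \<forall>c.
    cmp C g (addm C f f') = addm C (cmp C g f) (cmp C g f') \<and>
    cmp C (addm C g g') f = addm C (cmp C g f) (cmp C g' f) \<and>
    cmp C g (smul C c f) = smul C c (cmp C g f) \<and>
    cmp C (smul C c g) f = smul C c (cmp C g f)"
    using klinear unfolding klinear_def by (elim conjE)
  then show ?thesis using assms by blast
qed

lemma cmp_addm_right:
  "\<lbrakk>A \<in> Ob C; B \<in> Ob C; D \<in> Ob C; f \<in> Hom C A B; f' \<in> Hom C A B; g \<in> Hom C B D\<rbrakk>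
   \<Longrightarrow> cmp C g (addm C f f') = addm C (cmp C g f) (cmp C g f')"
  using cmp_bilinear by blast

lemma cmp_addm_left:
  "\<lbrakk>A \<in> Ob C; B \<in> Ob C; D \<in> Ob C; f \<in> Hom C A B; g \<in> Hom C B D; g' \<in> Hom C B D\<rbrakk>
   \<Longrightarrow> cmp C (addm C g g') f = addm C (cmp C g f) (cmp C g' f)"
  using cmp_bilinear by blast

lemma cmp_smul_right:
  "\<lbrakk>A \<in> Ob C; B \<in> Ob C; D \<in> Ob C; f \<in> Hom C A B; g \<in> Hom C B D\<rbrakk>
   \<Longrightarrow> cmp C g (smul C c f) = smul C c (cmp C g f)"
  using cmp_bilinear by blast

lemma cmp_smul_left:
  "\<lbrakk>A \<in> Ob C; B \<in> Ob C; D \<in> Ob C; f \<in> Hom C A B; g \<in> Hom C B D\<rbrakk>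
   \<Longrightarrow> cmp C (smul C c g) f = smul C c (cmp C g f)"
  using cmp_bilinear by blast

lemma cmp_zerom_right:
  assumes "A \<in> Ob C" "B \<in> Ob C" "D \<in> Ob C" "g \<in> Hom C B D"
  shows "cmp C g (zerom C A B) = zerom C A D"
  using cmp_smul_right[OF assms(1-3) zerom_closed assms(4), of 0] assms
  by (simp add: smul_zerom smul_zero cmp_closed zerom_closed)

lemma cmp_zerom_left:
  assumes "A \<in> Ob C" "B \<in> Ob C" "D \<in> Ob C" "f \<in> Hom C A B"
  shows "cmp C (zerom C B D) f = zerom C A D"
  using cmp_smul_left[OF assms(1-4) zerom_closed, of 0] assms
  by (simp add: smul_zerom smul_zero cmp_closed zerom_closed)

lemma shO_closed: "A \<in> Ob C \<Longrightarrow> shO C A \<in> Ob C"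
  using shift_equiv unfolding shift_equiv_def by blast

lemma shO_iter_closed: "A \<in> Ob C \<Longrightarrow> (shO C ^^ n) A \<in> Ob C"
  by (induction n) (auto simp: shO_closed)

lemma shM_closed: "\<lbrakk>A \<in> Ob C; B \<in> Ob C; f \<in> Hom C A B\<rbrakk> \<Longrightarrow> shM C f \<in> Hom C (shO C A) (shO C B)"
  using shift_equiv unfolding shift_equiv_def by blast

lemma shM_idm: "A \<in> Ob C \<Longrightarrow> shM C (idm C A) = idm C (shO C A)"
  using shift_equiv unfolding shift_equiv_def by blast

lemma shM_cmp:
  "\<lbrakk>A \<in> Ob C; B \<in> Ob C; D \<in> Ob C; f \<in> Hom C A B; g \<in> Hom C B D\<rbrakk>
   \<Longrightarrow> shM C (cmp C g f) = cmp C (shM C g) (shM C f)"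
  using shift_equiv unfolding shift_equiv_def by blast

lemma shM_addm:
  "\<lbrakk>A \<in> Ob C; B \<in> Ob C; f \<in> Hom C A B; g \<in> Hom C A B\<rbrakk> \<Longrightarrow> shM C (addm C f g) = addm C (shM C f) (shM C g)"
  using shift_equiv unfolding shift_equiv_def by blast

lemma shM_smul: "\<lbrakk>A \<in> Ob C; B \<in> Ob C; f \<in> Hom C A B\<rbrakk> \<Longrightarrow> shM C (smul C c f) = smul C c (shM C f)"
  using shift_equiv unfolding shift_equiv_def by blast

lemma shM_bij: "\<lbrakk>A \<in> Ob C; B \<in> Ob C\<rbrakk> \<Longrightarrow> bij_betw (shM C) (Hom C A B) (Hom C (shO C A) (shO C B))"
  using shift_equiv unfolding shift_equiv_def by blast

lemma shO_ess_surj: "B \<in> Ob C \<Longrightarrow> \<exists>A\<in>Ob C. iso_obj C (shO C A) B"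
  using shift_equiv unfolding shift_equiv_def by blast

lemma shM_inj: "\<lbrakk>A \<in> Ob C; B \<in> Ob C; f \<in> Hom C A B; g \<in> Hom C A B; shM C f = shM C g\<rbrakk> \<Longrightarrow> f = g"
  using shM_bij unfolding bij_betw_def inj_on_def by blast

lemma shM_surj: "\<lbrakk>A \<in> Ob C; B \<in> Ob C; y \<in> Hom C (shO C A) (shO C B)\<rbrakk> \<Longrightarrow> \<exists>x\<in>Hom C A B. y = shM C x"
  using shM_bij unfolding bij_betw_def by blast

lemma shM_zerom: "\<lbrakk>A \<in> Ob C; B \<in> Ob C\<rbrakk> \<Longrightarrow> shM C (zerom C A B) = zerom C (shO C A) (shO C B)"
  by (metis shM_addm zerom_closed zerom_addm addm_idem_zerom shM_closed shO_closed)

lemma shM_eq_zerom_iff: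
  "\<lbrakk>A \<in> Ob C; B \<in> Ob C; f \<in> Hom C A B\<rbrakk> \<Longrightarrow> shM C f = zerom C (shO C A) (shO C B) \<longleftrightarrow> f = zerom C A B"
  by (metis shM_inj shM_zerom zerom_closed)

section \<open>Distinguished triangles\<close>

definition is_zero_obj :: "'o \<Rightarrow> bool" where
  "is_zero_obj Z \<longleftrightarrow> Z \<in> Ob C \<and> (\<forall>X\<in>Ob C. Hom C Z X = {zerom C Z X} \<and> Hom C X Z = {zerom C X Z})"

lemma zero_obj_exists: "\<exists>Z. is_zero_obj Z"
proof -
  have "additive C" using triangulated unfolding triangulated_def by (elim conjE)
  then show ?thesis unfolding additive_def is_zero_obj_def by (elim conjE) blast
qed

lemma is_zero_obj_shO:
  assumes Z: "is_zero_obj Z"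
  shows "is_zero_obj (shO C Z)"
proof -
  have ZO: "Z \<in> Ob C" and Z1: "shO C Z \<in> Ob C" using Z shO_closed unfolding is_zero_obj_def by auto
  have "Hom C (shO C Z) X = {zerom C (shO C Z) X} \<and> Hom C X (shO C Z) = {zerom C X (shO C Z)}"
    if X: "X \<in> Ob C" for X
  proof -
    obtain Y where Y: "Y \<in> Ob C" "iso_obj C (shO C Y) X" using shO_ess_surj X by blast
    have Y1: "shO C Y \<in> Ob C" using shO_closed Y by blast
    obtain p q where pq: "p \<in> Hom C (shO C Y) X" "q \<in> Hom C X (shO C Y)"
      "cmp C q p = idm C (shO C Y)" "cmp C p q = idm C X"
      using Y unfolding iso_obj_def by blast
    have "t = zerom C (shO C Z) X" if t: "t \<in> Hom C (shO C Z) X" for t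
    proof -
      have "cmp C q t \<in> Hom C (shO C Z) (shO C Y)" using cmp_closed Z1 X Y1 t pq by blast
      then obtain s where s: "s \<in> Hom C Z Y" "cmp C q t = shM C s" using shM_surj ZO Y by blast
      have "s = zerom C Z Y" using s Z Y unfolding is_zero_obj_def by blast
      then have "cmp C q t = zerom C (shO C Z) (shO C Y)" using s shM_zerom ZO Y by simp
      moreover have "t = cmp C p (cmp C q t)"
        using cmp_assoc[OF Z1 X Y1 X t pq(2) pq(1)] pq cmp_idm_left[OF Z1 X t] by simp
      ultimately show ?thesis using cmp_zerom_right[OF Z1 Y1 X pq(1)] by simp
    qed
    moreover have "t = zerom C X (shO C Z)" if t: "t \<in> Hom C X (shO C Z)" for t
    proof -
      have "cmp C t p \<in> Hom C (shO C Y) (shO C Z)" using cmp_closed Z1 X Y1 t pq by blast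
      then obtain s where s: "s \<in> Hom C Y Z" "cmp C t p = shM C s" using shM_surj ZO Y by blast
      have "s = zerom C Y Z" using s Z Y unfolding is_zero_obj_def by blast
      then have "cmp C t p = zerom C (shO C Y) (shO C Z)" using s shM_zerom ZO Y by simp
      moreover have "t = cmp C (cmp C t p) q"
        using cmp_assoc[OF X Y1 X Z1 pq(2) pq(1) t] pq cmp_idm_right[OF X Z1 t] by simp
      ultimately show ?thesis using cmp_zerom_left[OF X Y1 Z1 pq(2)] by simp
    qed
    ultimately show ?thesis using zerom_closed Z1 X by blast
  qed
  then show ?thesis unfolding is_zero_obj_def using Z1 by blast
qed

lemma dist_wf:
  "(A, B, D, f, g, h) \<in> dist C \<Longrightarrow>
   A \<in> Ob C \<and> B \<in> Ob C \<and> D \<in> Ob C \<and> f \<in> Hom C A B \<and> g \<in> Hom C B D \<and> h \<in> Hom C D (shO C A)"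
proof -
  assume "(A, B, D, f, g, h) \<in> dist C"
  moreover have "\<forall>T\<in>dist C. tri_wf C T" using triangulated unfolding triangulated_def by (elim conjE)
  ultimately show ?thesis unfolding tri_wf_def by fastforce
qed

lemma dist_zero_obj:
  "\<lbrakk>A \<in> Ob C; is_zero_obj Z\<rbrakk> \<Longrightarrow> (A, A, Z, idm C A, zerom C A Z, zerom C Z (shO C A)) \<in> dist C"
proof -
  have "\<forall>A\<in>Ob C. \<forall>Z\<in>Ob C. (\<forall>X\<in>Ob C. Hom C Z X = {zerom C Z X} \<and> Hom C X Z = {zerom C X Z}) \<longrightarrow>
      (A, A, Z, idm C A, zerom C A Z, zerom C Z (shO C A)) \<in> dist C"
    using triangulated unfolding triangulated_def by (elim conjE)
  then show "\<lbrakk>A \<in> Ob C; is_zero_obj Z\<rbrakk> \<Longrightarrow> ?thesis" unfolding is_zero_obj_def by blast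
qed

lemma dist_rotate_iff:
  assumes "tri_wf C (A, B, D, f, g, h)"
  shows "(A, B, D, f, g, h) \<in> dist C \<longleftrightarrow> (B, D, shO C A, g, h, smul C (-1) (shM C f)) \<in> dist C"
proof -
  have "\<forall>A B D f g h. tri_wf C (A, B, D, f, g, h) \<longrightarrow>
      ((A, B, D, f, g, h) \<in> dist C \<longleftrightarrow> (B, D, shO C A, g, h, smul C (-1) (shM C f)) \<in> dist C)"
    using triangulated unfolding triangulated_def by (elim conjE)
  then show ?thesis using assms by blast
qed

lemma dist_rotate:
  "(A, B, D, f, g, h) \<in> dist C \<Longrightarrow> (B, D, shO C A, g, h, smul C (-1) (shM C f)) \<in> dist C"
  using dist_rotate_iff dist_wf unfolding tri_wf_def by blast

lemma dist_morphism_completion: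
  assumes "(A, B, D, f, g, h) \<in> dist C" "(A', B', D', f', g', h') \<in> dist C"
    "a \<in> Hom C A A'" "b \<in> Hom C B B'" "cmp C b f = cmp C f' a"
  shows "\<exists>c\<in>Hom C D D'. cmp C c g = cmp C g' b \<and> cmp C (shM C a) h = cmp C h' c"
proof -
  have "\<forall>A B D f g h A' B' D' f' g' h' a b.
      (A, B, D, f, g, h) \<in> dist C \<and> (A', B', D', f', g', h') \<in> dist C \<and>
      a \<in> Hom C A A' \<and> b \<in> Hom C B B' \<and> cmp C b f = cmp C f' a
      \<longrightarrow> (\<exists>c\<in>Hom C D D'. cmp C c g = cmp C g' b \<and> cmp C (shM C a) h = cmp C h' c)"
    using triangulated unfolding triangulated_def by (elim conjE)
  then show ?thesis using assms by blast
qed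

lemma dist_shift_iter:
  assumes "(A, B, D, f, g, h) \<in> dist C"
  shows "\<exists>f' g' h'. ((shO C ^^ n) A, (shO C ^^ n) B, (shO C ^^ n) D, f', g', h') \<in> dist C"
proof (induction n)
  case 0
  then show ?case using assms by auto
next
  case (Suc n)
  then obtain f' g' h' where "((shO C ^^ n) A, (shO C ^^ n) B, (shO C ^^ n) D, f', g', h') \<in> dist C"
    by blast
  from dist_rotate[OF dist_rotate[OF dist_rotate[OF this]]] show ?case by auto
qed

lemma dist_cmp_zerom:
  assumes T: "(A, B, D, f, g, h) \<in> dist C"
  shows "cmp C g f = zerom C A D"
proof -
  note wf = dist_wf[OF T]
  obtain Z where Z: "is_zero_obj Z" using zero_obj_exists by blast
  have ZO: "Z \<in> Ob C" using Z unfolding is_zero_obj_def by blast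
  obtain c where c: "c \<in> Hom C Z D" "cmp C c (zerom C A Z) = cmp C g f"
    using dist_morphism_completion[OF dist_zero_obj[OF _ Z] T idm_closed _ refl] wf by blast
  have "c = zerom C Z D" using c Z wf unfolding is_zero_obj_def by blast
  then show ?thesis using c cmp_zerom_left[OF _ ZO, of A D] zerom_closed[of A Z] ZO wf by simp
qed

lemma dist_cov_exact:
  assumes T: "(A, B, D, f, g, h) \<in> dist C" and W: "W \<in> Ob C"
    and u: "u \<in> Hom C W B" and gu: "cmp C g u = zerom C W D"
  shows "\<exists>v\<in>Hom C W A. u = cmp C f v"
proof -
  note wf = dist_wf[OF T]
  obtain Z where Z: "is_zero_obj Z" using zero_obj_exists by blast
  have ZO: "Z \<in> Ob C" using Z unfolding is_zero_obj_def by blast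
  have W1: "shO C W \<in> Ob C" and A1: "shO C A \<in> Ob C" and B1: "shO C B \<in> Ob C"
    using shO_closed W wf by auto
  have square: "cmp C (zerom C Z D) (zerom C W Z) = cmp C g u"
    using gu cmp_zerom_left[OF W ZO, of D] zerom_closed W ZO wf by simp
  obtain c where c: "c \<in> Hom C (shO C W) (shO C A)"
    "cmp C (shM C u) (smul C (-1) (shM C (idm C W))) = cmp C (smul C (-1) (shM C f)) c"
    using dist_morphism_completion[OF dist_rotate[OF dist_zero_obj[OF W Z]] dist_rotate[OF T] u
        zerom_closed[OF ZO] square] wf
    by blast
  have su: "shM C u \<in> Hom C (shO C W) (shO C B)" and sf: "shM C f \<in> Hom C (shO C A) (shO C B)"
    using shM_closed u W wf by auto
  have "cmp C (shM C u) (smul C (-1) (shM C (idm C W))) = smul C (-1) (shM C u)"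
    using cmp_smul_right[OF W1 W1 B1 idm_closed[OF W1] su] cmp_idm_right[OF W1 B1 su] shM_idm[OF W]
    by simp
  moreover have "cmp C (smul C (-1) (shM C f)) c = smul C (-1) (cmp C (shM C f) c)"
    using cmp_smul_left[OF W1 A1 B1 c(1) sf] .
  ultimately have "shM C u = cmp C (shM C f) c"
    using c(2) smul_cancel[OF W1 B1] su cmp_closed[OF W1 A1 B1 c(1) sf] by (metis neg_equal_0_iff_equal one_neq_zero)
  moreover obtain v where v: "v \<in> Hom C W A" "c = shM C v" using shM_surj[OF W _ c(1)] wf by blast
  ultimately have "shM C u = shM C (cmp C f v)" using shM_cmp[OF W _ _ v(1), of B f] wf by simp
  then have "u = cmp C f v" using shM_inj[OF W _ u] cmp_closed[OF W _ _ v(1), of B f] wf by simp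
  then show ?thesis using v by blast
qed

lemma dist_contra_exact:
  assumes T: "(A, B, D, f, g, h) \<in> dist C" and W: "W \<in> Ob C"
    and x: "x \<in> Hom C B W" and xf: "cmp C x f = zerom C A W"
  shows "\<exists>y\<in>Hom C D W. x = cmp C y g"
proof -
  note wf = dist_wf[OF T]
  obtain Z where Z: "is_zero_obj Z" using zero_obj_exists by blast
  have ZO: "Z \<in> Ob C" and Z1O: "shO C Z \<in> Ob C" and W1: "shO C W \<in> Ob C"
    using Z shO_closed W unfolding is_zero_obj_def by auto
  have "smul C (-1) (shM C (zerom C Z W)) = zerom C (shO C Z) (shO C W)"
    using shM_zerom[OF ZO W] smul_zerom[OF Z1O W1] by simp
  moreover have "tri_wf C (Z, W, W, zerom C Z W, idm C W, zerom C W (shO C Z))"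
    unfolding tri_wf_def using ZO W zerom_closed idm_closed Z1O by auto
  ultimately have T0: "(Z, W, W, zerom C Z W, idm C W, zerom C W (shO C Z)) \<in> dist C"
    using dist_rotate_iff dist_zero_obj[OF W is_zero_obj_shO[OF Z]] by simp
  have square: "cmp C x f = cmp C (zerom C Z W) (zerom C A Z)"
    using xf cmp_zerom_left[OF _ ZO W, of A] zerom_closed wf ZO by simp
  obtain c where c: "c \<in> Hom C D W" "cmp C c g = cmp C (idm C W) x"
    using dist_morphism_completion[OF T T0 zerom_closed[OF _ ZO] x square] wf by blast
  then show ?thesis using cmp_idm_left[OF _ W x] wf by auto
qed

section \<open>Hom spaces of dimension zero or one\<close>

definition hom_zero :: "'o \<Rightarrow> 'o \<Rightarrow> bool" where
  "hom_zero X Y \<longleftrightarrow> Hom C X Y \<subseteq> {zerom C X Y}"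

definition hom_line :: "'o \<Rightarrow> 'o \<Rightarrow> bool" where
  "hom_line X Y \<longleftrightarrow> (\<exists>v\<in>Hom C X Y. v \<noteq> zerom C X Y \<and> (\<forall>x\<in>Hom C X Y. \<exists>c. x = smul C c v))"

definition hom_dim01 :: "'o \<Rightarrow> 'o \<Rightarrow> bool \<Rightarrow> bool" where
  "hom_dim01 X Y b \<longleftrightarrow> (if b then hom_line X Y else hom_zero X Y)"

lemma hom_zeroD: "\<lbrakk>hom_zero X Y; x \<in> Hom C X Y\<rbrakk> \<Longrightarrow> x = zerom C X Y"
  unfolding hom_zero_def by blast

lemma hom_line_smul:
  assumes O: "X \<in> Ob C" "Y \<in> Ob C" and line: "hom_line X Y"
    and g: "g \<in> Hom C X Y" "g \<noteq> zerom C X Y" and v: "v \<in> Hom C X Y"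
  shows "\<exists>c. v = smul C c g"
proof -
  obtain w where w: "w \<in> Hom C X Y" "\<forall>x\<in>Hom C X Y. \<exists>c. x = smul C c w"
    using line unfolding hom_line_def by blast
  obtain a b where a: "g = smul C a w" and b: "v = smul C b w" using w g v by blast
  have "a \<noteq> 0" using a g smul_zero[OF O w(1)] by auto
  then have "smul C (b / a) g = v" using a b smul_mult[OF O w(1), symmetric] by simp
  then show ?thesis by metis
qed

lemma hom_line_endo:
  assumes X: "X \<in> Ob C" and line: "hom_line X X" and s: "s \<in> Hom C X X"
  shows "\<exists>c. s = smul C c (idm C X)"
proof -
  have "idm C X \<noteq> zerom C X X"
  proof
    assume "idm C X = zerom C X X"
    then have "Hom C X X \<subseteq> {zerom C X X}"
      using cmp_idm_right[OF X X] cmp_zerom_right[OF X X X] by force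
    then show False using line unfolding hom_line_def by blast
  qed
  then show ?thesis using hom_line_smul[OF X X line idm_closed[OF X] _ s] by blast
qed

lemma hom_line_cmp_surj:
  assumes X: "X \<in> Ob C" and Y: "Y \<in> Ob C" and line: "hom_line X Y"
    and g: "g \<in> Hom C X Y" "g \<noteq> zerom C X Y"
  shows "\<forall>z\<in>Hom C X Y. \<exists>y\<in>Hom C X X. z = cmp C g y"
proof
  fix z assume "z \<in> Hom C X Y"
  then obtain c where "z = smul C c g" using hom_line_smul[OF X Y line g] by blast
  then have "z = cmp C g (smul C c (idm C X))"
    using cmp_smul_right[OF X X Y idm_closed[OF X] g(1)] cmp_idm_right[OF X Y g(1)] by simp
  then show "\<exists>y\<in>Hom C X X. z = cmp C g y" using smul_closed[OF X X idm_closed[OF X]] by blast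
qed

lemma hom_line_endo_cmp_inj:
  assumes X: "X \<in> Ob C" and Y: "Y \<in> Ob C" and line: "hom_line X X"
    and g: "g \<in> Hom C X Y" "g \<noteq> zerom C X Y"
  shows "\<forall>v\<in>Hom C X X. cmp C g v = zerom C X Y \<longrightarrow> v = zerom C X X"
proof (intro ballI impI)
  fix v assume v: "v \<in> Hom C X X" and gv: "cmp C g v = zerom C X Y"
  obtain c where c: "v = smul C c (idm C X)" using hom_line_endo[OF X line v] by blast
  then have "smul C c g = zerom C X Y"
    using gv cmp_smul_right[OF X X Y idm_closed[OF X] g(1)] cmp_idm_right[OF X Y g(1)] by simp
  then have "c = 0" using smul_eq_zerom_iff[OF X Y g(1)] g(2) by blast
  then show "v = zerom C X X" using c smul_zero[OF X X idm_closed[OF X]] by simp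
qed

lemma linear_bij_betw_Hom:
  assumes O: "X \<in> Ob C" "Y \<in> Ob C" "X' \<in> Ob C" "Y' \<in> Ob C"
    and closed: "\<forall>x\<in>Hom C X Y. \<phi> x \<in> Hom C X' Y'"
    and additive: "\<forall>x\<in>Hom C X Y. \<forall>y\<in>Hom C X Y. \<phi> (addm C x y) = addm C (\<phi> x) (\<phi> y)"
    and homogeneous: "\<forall>x\<in>Hom C X Y. \<forall>c. \<phi> (smul C c x) = smul C c (\<phi> x)"
    and kernel: "\<forall>x\<in>Hom C X Y. \<phi> x = zerom C X' Y' \<longrightarrow> x = zerom C X Y"
    and surj: "\<forall>y\<in>Hom C X' Y'. \<exists>x\<in>Hom C X Y. y = \<phi> x"
  shows "bij_betw \<phi> (Hom C X Y) (Hom C X' Y')"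
  unfolding bij_betw_def
proof
  show "inj_on \<phi> (Hom C X Y)"
  proof (rule inj_onI)
    fix x y assume xy: "x \<in> Hom C X Y" "y \<in> Hom C X Y" "\<phi> x = \<phi> y"
    have "\<phi> (addm C x (smul C (-1) y)) = zerom C X' Y'"
      using xy additive homogeneous smul_closed[OF O(1,2)] addm_neg[OF O(3,4)] closed by simp
    then show "x = y"
      using kernel eq_of_addm_neg[OF O(1,2) xy(1,2)] addm_closed[OF O(1,2)] smul_closed[OF O(1,2)] xy
      by blast
  qed
  show "\<phi> ` Hom C X Y = Hom C X' Y'" using closed surj by blast
qed

context
  fixes X Y X' Y' \<phi>
  assumes O: "X \<in> Ob C" "Y \<in> Ob C" "X' \<in> Ob C" "Y' \<in> Ob C"
    and bij: "bij_betw \<phi> (Hom C X Y) (Hom C X' Y')"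
    and homogeneous: "\<forall>x\<in>Hom C X Y. \<forall>c. \<phi> (smul C c x) = smul C c (\<phi> x)"
begin

lemma bij_betw_Hom_closed: "x \<in> Hom C X Y \<Longrightarrow> \<phi> x \<in> Hom C X' Y'"
  using bij by (rule bij_betw_apply)

lemma bij_betw_Hom_surj: "y \<in> Hom C X' Y' \<Longrightarrow> \<exists>x\<in>Hom C X Y. y = \<phi> x"
  using bij unfolding bij_betw_def by blast

lemma bij_betw_Hom_inj: "\<lbrakk>x \<in> Hom C X Y; y \<in> Hom C X Y; \<phi> x = \<phi> y\<rbrakk> \<Longrightarrow> x = y"
  using bij unfolding bij_betw_def inj_on_def by blast

lemma bij_betw_Hom_zerom: "\<phi> (zerom C X Y) = zerom C X' Y'"
proof -
  have "\<phi> (smul C 0 (zerom C X Y)) = smul C 0 (\<phi> (zerom C X Y))"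
    using homogeneous zerom_closed[OF O(1,2)] by blast
  then show ?thesis
    using smul_zero[OF O(1,2)] smul_zero[OF O(3,4)] zerom_closed[OF O(1,2)] bij_betw_Hom_closed by simp
qed

lemma bij_betw_Hom_kernel: "\<lbrakk>x \<in> Hom C X Y; \<phi> x = zerom C X' Y'\<rbrakk> \<Longrightarrow> x = zerom C X Y"
  using bij_betw_Hom_inj zerom_closed[OF O(1,2)] bij_betw_Hom_zerom by simp

lemma hom_zero_transfer: "hom_zero X Y \<longleftrightarrow> hom_zero X' Y'"
proof
  assume "hom_zero X Y"
  then show "hom_zero X' Y'" using bij_betw_Hom_surj bij_betw_Hom_zerom unfolding hom_zero_def by fastforce
next
  assume "hom_zero X' Y'"
  then show "hom_zero X Y" using bij_betw_Hom_kernel bij_betw_Hom_closed unfolding hom_zero_def by fastforce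
qed

lemma hom_line_transfer: "hom_line X Y \<longleftrightarrow> hom_line X' Y'"
proof
  assume "hom_line X Y"
  then obtain v where v: "v \<in> Hom C X Y" "v \<noteq> zerom C X Y" "\<forall>x\<in>Hom C X Y. \<exists>c. x = smul C c v"
    unfolding hom_line_def by blast
  have "\<exists>c. y = smul C c (\<phi> v)" if y: "y \<in> Hom C X' Y'" for y
  proof -
    obtain x c where "x \<in> Hom C X Y" "y = \<phi> x" "x = smul C c v" using bij_betw_Hom_surj v y by meson
    then show ?thesis using homogeneous v(1) by blast
  qed
  moreover have "\<phi> v \<noteq> zerom C X' Y'" using v bij_betw_Hom_kernel by blast
  ultimately show "hom_line X' Y'" unfolding hom_line_def using v(1) bij_betw_Hom_closed by blast
next
  assume "hom_line X' Y'"
  then obtain w where w: "w \<in> Hom C X' Y'" "w \<noteq> zerom C X' Y'" "\<forall>y\<in>Hom C X' Y'. \<exists>c. y = smul C c w"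
    unfolding hom_line_def by blast
  obtain v where v: "v \<in> Hom C X Y" "w = \<phi> v" using bij_betw_Hom_surj w by blast
  have "\<exists>c. x = smul C c v" if x: "x \<in> Hom C X Y" for x
  proof -
    obtain c where "\<phi> x = smul C c w" using w x bij_betw_Hom_closed by blast
    then have "\<phi> x = \<phi> (smul C c v)" using v homogeneous by simp
    then show ?thesis using bij_betw_Hom_inj x smul_closed[OF O(1,2) v(1)] by blast
  qed
  moreover have "v \<noteq> zerom C X Y" using v w bij_betw_Hom_zerom by auto
  ultimately show "hom_line X Y" unfolding hom_line_def using v(1) by blast
qed

lemma hom_dim01_transfer: "hom_dim01 X Y b \<longleftrightarrow> hom_dim01 X' Y' b"
  unfolding hom_dim01_def using hom_zero_transfer hom_line_transfer by simp

end

lemma hom_dim01_shift: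
  assumes "X \<in> Ob C" "Y \<in> Ob C"
  shows "hom_dim01 (shO C X) (shO C Y) b \<longleftrightarrow> hom_dim01 X Y b"
  using hom_dim01_transfer[OF assms shO_closed[OF assms(1)] shO_closed[OF assms(2)] shM_bij[OF assms]]
    shM_smul[OF assms] by blast

lemma hom_dim01_shift_iter:
  assumes "X \<in> Ob C" "Y \<in> Ob C"
  shows "hom_dim01 ((shO C ^^ r) X) ((shO C ^^ r) Y) b \<longleftrightarrow> hom_dim01 X Y b"
  by (induction r) (simp_all add: hom_dim01_shift shO_iter_closed assms)

lemma spans_Nil_iff: "spans C X Y [] \<longleftrightarrow> hom_zero X Y"
  unfolding spans_def hom_zero_def by auto

lemma spans_single_iff:
  assumes X: "X \<in> Ob C" and Y: "Y \<in> Ob C" and v: "v \<in> Hom C X Y"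
  shows "spans C X Y [v] \<longleftrightarrow> (\<forall>x\<in>Hom C X Y. \<exists>c. x = smul C c v)"
proof -
  have lincomb: "lincomb C X Y (zip [c] [v]) = smul C c v" for c
    using addm_zerom[OF X Y smul_closed[OF X Y v]] by simp
  have "{lincomb C X Y (zip cs [v]) | cs. length cs = length [v]} = range (\<lambda>c. smul C c v)"
  proof (intro set_eqI iffI)
    fix x assume "x \<in> {lincomb C X Y (zip cs [v]) | cs. length cs = length [v]}"
    then obtain c where "x = lincomb C X Y (zip [c] [v])" by (auto simp: length_Suc_conv)
    then show "x \<in> range (\<lambda>c. smul C c v)" using lincomb by simp
  next
    fix x assume "x \<in> range (\<lambda>c. smul C c v)"
    then obtain c where "x = lincomb C X Y (zip [c] [v])" using lincomb by auto
    moreover have "length [c] = length [v]" by simp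
    ultimately show "x \<in> {lincomb C X Y (zip cs [v]) | cs. length cs = length [v]}" by blast
  qed
  then show ?thesis unfolding spans_def using v by auto
qed

lemma hdim_eq_of_bool_iff:
  assumes X: "X \<in> Ob C" and Y: "Y \<in> Ob C" and span: "\<exists>vs. spans C X Y vs"
  shows "hdim C X Y = of_bool b \<longleftrightarrow> hom_dim01 X Y b"
proof -
  obtain vs where vs: "length vs = hdim C X Y" "spans C X Y vs"
    using LeastI_ex[of "\<lambda>n. \<exists>vs. length vs = n \<and> spans C X Y vs"] span unfolding hdim_def by blast
  have hdim_le: "hdim C X Y \<le> length ws" if "spans C X Y ws" for ws
    unfolding hdim_def using that by (blast intro: Least_le)
  have zero: "hdim C X Y = 0 \<longleftrightarrow> hom_zero X Y"
    using vs hdim_le[of "[]"] spans_Nil_iff by auto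
  have "hdim C X Y = 1 \<longleftrightarrow> hom_line X Y"
  proof
    assume one: "hdim C X Y = 1"
    then obtain v where "vs = [v]" using vs(1) by (cases vs) auto
    then have span_v: "spans C X Y [v]" using vs(2) by simp
    then have v: "v \<in> Hom C X Y" unfolding spans_def by simp
    have multiples: "\<forall>x\<in>Hom C X Y. \<exists>c. x = smul C c v" using spans_single_iff[OF X Y v] span_v by blast
    have "v \<noteq> zerom C X Y"
    proof
      assume v0: "v = zerom C X Y"
      have "hom_zero X Y" unfolding hom_zero_def
      proof
        fix x assume "x \<in> Hom C X Y"
        then obtain c where "x = smul C c v" using multiples by blast
        then show "x \<in> {zerom C X Y}" using v0 smul_zerom[OF X Y] by simp
      qed
      then show False using zero one by simp
    qed
    then show "hom_line X Y" unfolding hom_line_def using v multiples by blast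
  next
    assume "hom_line X Y"
    then obtain v where v: "v \<in> Hom C X Y" "v \<noteq> zerom C X Y" "\<forall>x\<in>Hom C X Y. \<exists>c. x = smul C c v"
      unfolding hom_line_def by blast
    then have "spans C X Y [v]" using spans_single_iff[OF X Y] by blast
    then have "hdim C X Y \<le> 1" using hdim_le by fastforce
    moreover have "\<not> hom_zero X Y" using v unfolding hom_zero_def by blast
    ultimately show "hdim C X Y = 1" using zero by linarith
  qed
  with zero show ?thesis unfolding hom_dim01_def by simp
qed

definition ext_dim01 :: "'o \<Rightarrow> 'o \<Rightarrow> int \<Rightarrow> bool \<Rightarrow> bool" where
  "ext_dim01 X Y i b \<longleftrightarrow> hom_dim01 ((shO C ^^ nat (- i)) X) ((shO C ^^ nat i) Y) b"

lemma ext_dim_eq_of_bool_iff: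
  assumes "finite_type C" and X: "X \<in> Ob C" and Y: "Y \<in> Ob C"
  shows "ext_dim C X Y i = of_bool b \<longleftrightarrow> ext_dim01 X Y i b"
proof (cases "0 \<le> i")
  case True
  then have "\<exists>vs. spans C X ((shO C ^^ nat i) Y) vs" using assms unfolding finite_type_def by blast
  then show ?thesis
    using hdim_eq_of_bool_iff[OF X shO_iter_closed[OF Y]] True
    unfolding ext_dim_def ext_dim01_def by simp
next
  case False
  then have "\<exists>vs. spans C ((shO C ^^ nat (- i)) X) Y vs" using assms unfolding finite_type_def by blast
  then show ?thesis
    using hdim_eq_of_bool_iff[OF shO_iter_closed[OF X] Y] False
    unfolding ext_dim_def ext_dim01_def by simp
qed

lemma spherical_ext_dim01:
  assumes "finite_type C" and sph: "spherical C E"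
  shows "ext_dim01 E E i (i = 0 \<or> i = 2)"
proof -
  have "E \<in> Ob C" "ext_dim C E E i = of_bool (i = 0 \<or> i = 2)"
    using sph unfolding spherical_def by auto
  then show ?thesis using ext_dim_eq_of_bool_iff assms(1) by blast
qed

lemma ext_dim01_iff_hom_dim01:
  assumes X: "X \<in> Ob C" and Y: "Y \<in> Ob C" and i: "int q - int p = i"
  shows "ext_dim01 X Y i b \<longleftrightarrow> hom_dim01 ((shO C ^^ p) X) ((shO C ^^ q) Y) b"
proof -
  have "nat (- i) + q = p + nat i" using i by linarith
  then have shifts: "(shO C ^^ nat (- i)) ((shO C ^^ q) Y) = (shO C ^^ p) ((shO C ^^ nat i) Y)"
    "(shO C ^^ nat (- i)) ((shO C ^^ p) X) = (shO C ^^ p) ((shO C ^^ nat (- i)) X)"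
    by (metis add.commute comp_apply funpow_add)+
  have "hom_dim01 ((shO C ^^ p) X) ((shO C ^^ q) Y) b \<longleftrightarrow>
      hom_dim01 ((shO C ^^ p) ((shO C ^^ nat (- i)) X)) ((shO C ^^ p) ((shO C ^^ nat i) Y)) b"
    using hom_dim01_shift_iter[of "(shO C ^^ p) X" "(shO C ^^ q) Y" "nat (- i)"] X Y shifts
    by (simp add: shO_iter_closed)
  also have "\<dots> \<longleftrightarrow> ext_dim01 X Y i b"
    unfolding ext_dim01_def using hom_dim01_shift_iter X Y by (simp add: shO_iter_closed)
  finally show ?thesis by simp
qed

lemma ext_dim01_shift_right:
  assumes "W \<in> Ob C" "Y \<in> Ob C"
  shows "ext_dim01 W (shO C Y) i b \<longleftrightarrow> ext_dim01 W Y (i + 1) b"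
  using ext_dim01_iff_hom_dim01[of W "shO C Y" "nat i" "nat (- i)" i]
    ext_dim01_iff_hom_dim01[of W Y "Suc (nat i)" "nat (- i)" "i + 1"]
  by (simp add: assms shO_closed funpow_Suc_right del: funpow.simps)

lemma ext_dim01_shift_left:
  assumes "W \<in> Ob C" "Y \<in> Ob C"
  shows "ext_dim01 (shO C W) Y i b \<longleftrightarrow> ext_dim01 W Y (i - 1) b"
  using ext_dim01_iff_hom_dim01[of "shO C W" Y "nat i" "nat (- i)" i]
    ext_dim01_iff_hom_dim01[of W Y "nat i" "Suc (nat (- i))" "i - 1"]
  by (simp add: assms shO_closed funpow_Suc_right del: funpow.simps)

section \<open>Long exact Hom sequences\<close>

context
  fixes X Y Z f g h
  assumes T: "(X, Y, Z, f, g, h) \<in> dist C"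
begin

lemma triangle_wf:
  "X \<in> Ob C" "Y \<in> Ob C" "Z \<in> Ob C" "shO C X \<in> Ob C"
  "f \<in> Hom C X Y" "g \<in> Hom C Y Z" "h \<in> Hom C Z (shO C X)"
  using dist_wf[OF T] shO_closed by auto

lemma hom_zero_snd:
  assumes W: "W \<in> Ob C" and X0: "hom_zero W X"
    and h_inj: "\<forall>v\<in>Hom C W Z. cmp C h v = zerom C W (shO C X) \<longrightarrow> v = zerom C W Z"
  shows "hom_zero W Y"
  unfolding hom_zero_def
proof
  fix u assume u: "u \<in> Hom C W Y"
  have gu: "cmp C g u \<in> Hom C W Z" using cmp_closed W triangle_wf u by blast
  have "cmp C h (cmp C g u) = cmp C (cmp C h g) u"
    using cmp_assoc[OF W triangle_wf(2,3,4) u triangle_wf(6,7)] .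
  also have "\<dots> = zerom C W (shO C X)"
    using dist_cmp_zerom[OF dist_rotate[OF T]] cmp_zerom_left W triangle_wf u by simp
  finally have "cmp C g u = zerom C W Z" using h_inj gu by blast
  then obtain v where v: "v \<in> Hom C W X" "u = cmp C f v" using dist_cov_exact[OF T W u] by blast
  then have "v = zerom C W X" using X0 hom_zeroD by blast
  then show "u \<in> {zerom C W Y}" using v cmp_zerom_right W triangle_wf by simp
qed

lemma hom_zero_trd:
  assumes W: "W \<in> Ob C"
    and f_surj: "\<forall>y\<in>Hom C W Y. \<exists>x\<in>Hom C W X. y = cmp C f x" and X1: "hom_zero W (shO C X)"
  shows "hom_zero W Z"
  unfolding hom_zero_def
proof
  fix z assume z: "z \<in> Hom C W Z"
  have "cmp C h z = zerom C W (shO C X)"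
    using X1 hom_zeroD cmp_closed W triangle_wf z by blast
  then obtain y where y: "y \<in> Hom C W Y" "z = cmp C g y" using dist_cov_exact[OF dist_rotate[OF T] W z] by blast
  then obtain x where x: "x \<in> Hom C W X" "y = cmp C f x" using f_surj by blast
  have "z = cmp C (cmp C g f) x"
    using y x cmp_assoc[OF W triangle_wf(1-3) x(1) triangle_wf(5,6)] by simp
  then show "z \<in> {zerom C W Z}"
    using x dist_cmp_zerom[OF T] cmp_zerom_left[OF W triangle_wf(1,3) x(1)] by simp
qed

lemma hom_dim01_snd_iff_trd:
  assumes W: "W \<in> Ob C" and X0: "hom_zero W X" and X1: "hom_zero W (shO C X)"
  shows "hom_dim01 W Y b \<longleftrightarrow> hom_dim01 W Z b"
proof (rule hom_dim01_transfer[OF W triangle_wf(2) W triangle_wf(3)])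
  show "bij_betw (cmp C g) (Hom C W Y) (Hom C W Z)"
  proof (rule linear_bij_betw_Hom[OF W triangle_wf(2) W triangle_wf(3)])
    show "\<forall>u\<in>Hom C W Y. cmp C g u = zerom C W Z \<longrightarrow> u = zerom C W Y"
    proof (intro ballI impI)
      fix u assume "u \<in> Hom C W Y" "cmp C g u = zerom C W Z"
      then obtain v where v: "v \<in> Hom C W X" "u = cmp C f v" using dist_cov_exact[OF T W] by blast
      then have "v = zerom C W X" using X0 hom_zeroD by blast
      then show "u = zerom C W Y" using v cmp_zerom_right W triangle_wf by simp
    qed
    show "\<forall>z\<in>Hom C W Z. \<exists>u\<in>Hom C W Y. z = cmp C g u"
    proof
      fix z assume z: "z \<in> Hom C W Z"
      then have "cmp C h z = zerom C W (shO C X)" using X1 hom_zeroD cmp_closed W triangle_wf by blast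
      then show "\<exists>u\<in>Hom C W Y. z = cmp C g u" using dist_cov_exact[OF dist_rotate[OF T] W z] by blast
    qed
    show "\<forall>u\<in>Hom C W Y. cmp C g u \<in> Hom C W Z"
      using cmp_closed[OF W triangle_wf(2,3) _ triangle_wf(6)] by blast
    show "\<forall>u\<in>Hom C W Y. \<forall>v\<in>Hom C W Y. cmp C g (addm C u v) = addm C (cmp C g u) (cmp C g v)"
      using cmp_addm_right[OF W triangle_wf(2,3) _ _ triangle_wf(6)] by blast
  qed (use cmp_smul_right[OF W triangle_wf(2,3) _ triangle_wf(6)] in blast)
qed (use cmp_smul_right[OF W triangle_wf(2,3) _ triangle_wf(6)] in blast)

lemma hom_zero_snd_contra:
  assumes W: "W \<in> Ob C" and X0: "hom_zero X W" and Z0: "hom_zero Z W"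
  shows "hom_zero Y W"
  unfolding hom_zero_def
proof
  fix x assume x: "x \<in> Hom C Y W"
  have "cmp C x f = zerom C X W" using X0 hom_zeroD cmp_closed W triangle_wf x by blast
  then obtain y where y: "y \<in> Hom C Z W" "x = cmp C y g" using dist_contra_exact[OF T W x] by blast
  then have "y = zerom C Z W" using Z0 hom_zeroD by blast
  then show "x \<in> {zerom C Y W}" using y cmp_zerom_left W triangle_wf by simp
qed

lemma hom_dim01_trd_iff_snd_contra:
  assumes W: "W \<in> Ob C" and X0: "hom_zero X W" and X1: "hom_zero (shO C X) W"
  shows "hom_dim01 Z W b \<longleftrightarrow> hom_dim01 Y W b"
proof (rule hom_dim01_transfer[OF triangle_wf(3) W triangle_wf(2) W])
  show "bij_betw (\<lambda>y. cmp C y g) (Hom C Z W) (Hom C Y W)"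
  proof (rule linear_bij_betw_Hom[OF triangle_wf(3) W triangle_wf(2) W])
    show "\<forall>y\<in>Hom C Z W. cmp C y g = zerom C Y W \<longrightarrow> y = zerom C Z W"
    proof (intro ballI impI)
      fix y assume "y \<in> Hom C Z W" "cmp C y g = zerom C Y W"
      then obtain x where x: "x \<in> Hom C (shO C X) W" "y = cmp C x h"
        using dist_contra_exact[OF dist_rotate[OF T] W] by blast
      then have "x = zerom C (shO C X) W" using X1 hom_zeroD by blast
      then show "y = zerom C Z W" using x cmp_zerom_left W triangle_wf by simp
    qed
    show "\<forall>x\<in>Hom C Y W. \<exists>y\<in>Hom C Z W. x = cmp C y g"
    proof
      fix x assume x: "x \<in> Hom C Y W"
      then have "cmp C x f = zerom C X W" using X0 hom_zeroD cmp_closed W triangle_wf by blast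
      then show "\<exists>y\<in>Hom C Z W. x = cmp C y g" using dist_contra_exact[OF T W x] by blast
    qed
    show "\<forall>y\<in>Hom C Z W. cmp C y g \<in> Hom C Y W"
      using cmp_closed[OF triangle_wf(2,3) W triangle_wf(6)] by blast
    show "\<forall>y\<in>Hom C Z W. \<forall>y'\<in>Hom C Z W. cmp C (addm C y y') g = addm C (cmp C y g) (cmp C y' g)"
      using cmp_addm_left[OF triangle_wf(2,3) W triangle_wf(6)] by blast
  qed (use cmp_smul_left[OF triangle_wf(2,3) W triangle_wf(6)] in blast)
qed (use cmp_smul_left[OF triangle_wf(2,3) W triangle_wf(6)] in blast)

end

context
  fixes X Y Z f g h
  assumes T: "(X, Y, Z, f, g, h) \<in> dist C"
begin

lemma ext_dim01_snd_zero:
  assumes W: "W \<in> Ob C" and X0: "ext_dim01 W X i False" and Z0: "ext_dim01 W Z i False"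
  shows "ext_dim01 W Y i False"
proof -
  obtain q p where i: "i = int q - int p" by (rule int_diff_cases)
  obtain f' g' h' where Tq: "((shO C ^^ q) X, (shO C ^^ q) Y, (shO C ^^ q) Z, f', g', h') \<in> dist C"
    using dist_shift_iter[OF T] by blast
  have Wp: "(shO C ^^ p) W \<in> Ob C" using W shO_iter_closed by blast
  have "hom_zero ((shO C ^^ p) W) ((shO C ^^ q) X)" "hom_zero ((shO C ^^ p) W) ((shO C ^^ q) Z)"
    using X0 Z0 ext_dim01_iff_hom_dim01 W triangle_wf[OF T] i unfolding hom_dim01_def by auto
  then have "hom_zero ((shO C ^^ p) W) ((shO C ^^ q) Y)"
    using hom_zero_snd[OF Tq Wp] hom_zeroD by blast
  then show ?thesis using ext_dim01_iff_hom_dim01 W triangle_wf[OF T] i unfolding hom_dim01_def by auto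
qed

lemma ext_dim01_snd_iff_trd:
  assumes W: "W \<in> Ob C" and X0: "ext_dim01 W X i False" and X1: "ext_dim01 W X (i + 1) False"
  shows "ext_dim01 W Y i b \<longleftrightarrow> ext_dim01 W Z i b"
proof -
  obtain q p where i: "i = int q - int p" by (rule int_diff_cases)
  obtain f' g' h' where Tq: "((shO C ^^ q) X, (shO C ^^ q) Y, (shO C ^^ q) Z, f', g', h') \<in> dist C"
    using dist_shift_iter[OF T] by blast
  have Wp: "(shO C ^^ p) W \<in> Ob C" using W shO_iter_closed by blast
  have "hom_zero ((shO C ^^ p) W) ((shO C ^^ q) X)"
    using X0 ext_dim01_iff_hom_dim01 W triangle_wf[OF T] i unfolding hom_dim01_def by auto
  moreover have "hom_zero ((shO C ^^ p) W) (shO C ((shO C ^^ q) X))"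
    using X1 ext_dim01_iff_hom_dim01[of W X "Suc q" p] W triangle_wf[OF T] i unfolding hom_dim01_def by auto
  ultimately show ?thesis
    using hom_dim01_snd_iff_trd[OF Tq Wp] ext_dim01_iff_hom_dim01 W triangle_wf[OF T] i by auto
qed

lemma ext_dim01_snd_zero_contra:
  assumes W: "W \<in> Ob C" and X0: "ext_dim01 X W i False" and Z0: "ext_dim01 Z W i False"
  shows "ext_dim01 Y W i False"
proof -
  obtain q p where i: "i = int q - int p" by (rule int_diff_cases)
  obtain f' g' h' where Tp: "((shO C ^^ p) X, (shO C ^^ p) Y, (shO C ^^ p) Z, f', g', h') \<in> dist C"
    using dist_shift_iter[OF T] by blast
  have Wq: "(shO C ^^ q) W \<in> Ob C" using W shO_iter_closed by blast
  have "hom_zero ((shO C ^^ p) X) ((shO C ^^ q) W)" "hom_zero ((shO C ^^ p) Z) ((shO C ^^ q) W)"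
    using X0 Z0 ext_dim01_iff_hom_dim01 W triangle_wf[OF T] i unfolding hom_dim01_def by auto
  then have "hom_zero ((shO C ^^ p) Y) ((shO C ^^ q) W)"
    using hom_zero_snd_contra[OF Tp Wq] by blast
  then show ?thesis using ext_dim01_iff_hom_dim01 W triangle_wf[OF T] i unfolding hom_dim01_def by auto
qed

lemma ext_dim01_trd_iff_snd_contra:
  assumes W: "W \<in> Ob C" and X0: "ext_dim01 X W i False" and X1: "ext_dim01 X W (i - 1) False"
  shows "ext_dim01 Z W i b \<longleftrightarrow> ext_dim01 Y W i b"
proof -
  obtain q p where i: "i = int q - int p" by (rule int_diff_cases)
  obtain f' g' h' where Tp: "((shO C ^^ p) X, (shO C ^^ p) Y, (shO C ^^ p) Z, f', g', h') \<in> dist C"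
    using dist_shift_iter[OF T] by blast
  have Wq: "(shO C ^^ q) W \<in> Ob C" using W shO_iter_closed by blast
  have "hom_zero ((shO C ^^ p) X) ((shO C ^^ q) W)"
    using X0 ext_dim01_iff_hom_dim01 W triangle_wf[OF T] i unfolding hom_dim01_def by auto
  moreover have "hom_zero (shO C ((shO C ^^ p) X)) ((shO C ^^ q) W)"
    using X1 ext_dim01_iff_hom_dim01[of X W q "Suc p"] W triangle_wf[OF T] i unfolding hom_dim01_def by auto
  ultimately show ?thesis
    using hom_dim01_trd_iff_snd_contra[OF Tp Wq] ext_dim01_iff_hom_dim01 W triangle_wf[OF T] i by auto
qed

end

text \<open>Exactness of Hom(W, Z[i-1]) -> Hom(W, X[i]) -> Hom(W, Y[i]) -> Hom(W, Z[i]) and of its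
  contravariant analogue, obtained from the previous lemmas for the rotated triangles.\<close>

context
  fixes X Y Z f g h
  assumes T: "(X, Y, Z, f, g, h) \<in> dist C"
begin

lemma ext_dim01_fst_zero:
  assumes W: "W \<in> Ob C" and "ext_dim01 W Z (i - 1) False" and "ext_dim01 W Y i False"
  shows "ext_dim01 W X i False"
  using ext_dim01_snd_zero[OF dist_rotate[OF dist_rotate[OF T]] W, of "i - 1"] assms
    ext_dim01_shift_right[OF W] triangle_wf[OF T] by simp

lemma ext_dim01_fst_iff_snd:
  assumes W: "W \<in> Ob C" and "ext_dim01 W Z (i - 1) False" and "ext_dim01 W Z i False"
  shows "ext_dim01 W X i b \<longleftrightarrow> ext_dim01 W Y i b"
  using ext_dim01_snd_iff_trd[OF dist_rotate[OF dist_rotate[OF T]] W, of "i - 1"] assms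
    ext_dim01_shift_right[OF W] triangle_wf[OF T] by simp

lemma ext_dim01_fst_iff_trd:
  assumes W: "W \<in> Ob C" and "ext_dim01 W Y (i - 1) False" and "ext_dim01 W Y i False"
  shows "ext_dim01 W X i b \<longleftrightarrow> ext_dim01 W Z (i - 1) b"
  using ext_dim01_snd_iff_trd[OF dist_rotate[OF T] W, of "i - 1"] assms
    ext_dim01_shift_right[OF W] triangle_wf[OF T] by simp

lemma ext_dim01_fst_zero_contra:
  assumes W: "W \<in> Ob C" and "ext_dim01 Z W (i + 1) False" and "ext_dim01 Y W i False"
  shows "ext_dim01 X W i False"
  using ext_dim01_snd_zero_contra[OF dist_rotate[OF dist_rotate[OF T]] W, of "i + 1"] assms
    ext_dim01_shift_left[OF _ W] triangle_wf[OF T] by simp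

lemma ext_dim01_fst_iff_snd_contra:
  assumes W: "W \<in> Ob C" and "ext_dim01 Z W i False" and "ext_dim01 Z W (i + 1) False"
  shows "ext_dim01 X W i b \<longleftrightarrow> ext_dim01 Y W i b"
  using ext_dim01_trd_iff_snd_contra[OF dist_rotate[OF dist_rotate[OF T]] W, of "i + 1"] assms
    ext_dim01_shift_left[OF _ W] triangle_wf[OF T] by simp

lemma ext_dim01_fst_iff_trd_contra:
  assumes W: "W \<in> Ob C" and "ext_dim01 Y W i False" and "ext_dim01 Y W (i + 1) False"
  shows "ext_dim01 X W i b \<longleftrightarrow> ext_dim01 Z W (i + 1) b"
  using ext_dim01_trd_iff_snd_contra[OF dist_rotate[OF T] W, of "i + 1"] assms
    ext_dim01_shift_left[OF _ W] triangle_wf[OF T] by simp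

lemma ext_dim01_to_fibre_zero:
  assumes g: "g \<noteq> zerom C Y Z"
    and YY0: "ext_dim01 Y Y 0 True" and YY1: "ext_dim01 Y Y 1 False"
    and YZ0: "ext_dim01 Y Z 0 True" and YZ_1: "ext_dim01 Y Z (-1) False"
  shows "ext_dim01 Y X 0 False" and "ext_dim01 Y X 1 False"
proof -
  note wf = triangle_wf[OF T]
  have Y1: "shO C Y \<in> Ob C" and Z1: "shO C Z \<in> Ob C" using shO_closed wf by auto
  have "hom_line (shO C Y) (shO C Y)"
    using YY0 ext_dim01_iff_hom_dim01[of Y Y 1 1] wf unfolding hom_dim01_def by simp
  moreover have "smul C (-1) (shM C g) \<in> Hom C (shO C Y) (shO C Z)"
    and "smul C (-1) (shM C g) \<noteq> zerom C (shO C Y) (shO C Z)"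
    using smul_closed[OF Y1 Z1] smul_eq_zerom_iff[OF Y1 Z1] shM_closed shM_eq_zerom_iff wf g by auto
  ultimately have "\<forall>v\<in>Hom C (shO C Y) (shO C Y).
      cmp C (smul C (-1) (shM C g)) v = zerom C (shO C Y) (shO C Z) \<longrightarrow> v = zerom C (shO C Y) (shO C Y)"
    by (rule hom_line_endo_cmp_inj[OF Y1 Z1])
  moreover have "hom_zero (shO C Y) Z"
    using YZ_1 ext_dim01_iff_hom_dim01[of Y Z 0 1] wf unfolding hom_dim01_def by simp
  ultimately have "hom_zero (shO C Y) (shO C X)"
    using hom_zero_snd[OF dist_rotate[OF dist_rotate[OF T]] Y1] by blast
  then show "ext_dim01 Y X 0 False"
    using ext_dim01_iff_hom_dim01[of Y X 1 1] wf unfolding hom_dim01_def by simp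
  have "hom_line Y Z"
    using YZ0 ext_dim01_iff_hom_dim01[of Y Z 0 0] wf unfolding hom_dim01_def by simp
  then have "\<forall>z\<in>Hom C Y Z. \<exists>y\<in>Hom C Y Y. z = cmp C g y"
    using hom_line_cmp_surj[OF wf(2,3) _ wf(6) g] by blast
  moreover have "hom_zero Y (shO C Y)"
    using YY1 ext_dim01_iff_hom_dim01[of Y Y 1 0] wf unfolding hom_dim01_def by simp
  ultimately have "hom_zero Y (shO C X)"
    using hom_zero_trd[OF dist_rotate[OF T] wf(2)] by blast
  then show "ext_dim01 Y X 1 False"
    using ext_dim01_iff_hom_dim01[of Y X 1 0] wf unfolding hom_dim01_def by simp
qed

end

section \<open>The objects E_n\<close>

lemma ext_dim01_to_fibre:
  assumes T: "(X, E, sh2 C Y, a, b, c) \<in> dist C" and b: "b \<noteq> zerom C E (sh2 C Y)"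
    and Y: "Y \<in> Ob C" and n: "1 \<le> n"
    and EE: "\<And>i. ext_dim01 E E i (i = 0 \<or> i = 2)"
    and EY: "\<And>i. ext_dim01 E Y i (i = 1 - int n \<or> i = 2)"
  shows "ext_dim01 E X i (i = - int n \<or> i = 2)"
proof -
  have E: "E \<in> Ob C" using dist_wf[OF T] by blast
  have EZ: "ext_dim01 E (sh2 C Y) j b' \<longleftrightarrow> ext_dim01 E Y (j + 2) b'" for j b'
    using ext_dim01_shift_right E Y shO_closed by (simp add: add.assoc)
  consider "i = - int n" | "i = 2" | "i = 0 \<or> i = 1" | "i \<notin> {- int n, 2, 0, 1}" by blast
  then show ?thesis
  proof cases
    case 1
    then have "ext_dim01 E X i b' \<longleftrightarrow> ext_dim01 E Y (i + 1) b'" for b'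
      using ext_dim01_fst_iff_trd[OF T E, of i b'] EE[of "i - 1"] EE[of i] EZ[of "i - 1" b'] n
      by (simp add: algebra_simps)
    then show ?thesis using EY[of "i + 1"] 1 by simp
  next
    case 2
    then have "ext_dim01 E X i b' \<longleftrightarrow> ext_dim01 E E i b'" for b'
      using ext_dim01_fst_iff_snd[OF T E, of i b'] EY[of 3] EY[of 4] EZ[of 1] EZ[of 2] n by simp
    then show ?thesis using EE[of i] 2 by simp
  next
    case 3
    have "ext_dim01 E (sh2 C Y) 0 True" "ext_dim01 E (sh2 C Y) (-1) False"
      using EZ EY[of 2] EY[of 1] n by simp_all
    then show ?thesis using ext_dim01_to_fibre_zero[OF T b] EE[of 0] EE[of 1] 3 n by auto
  next
    case 4
    then have "ext_dim01 E (sh2 C Y) (i - 1) False"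
      using EZ[of "i - 1"] EY[of "i + 1"] by (simp add: algebra_simps)
    then show ?thesis using ext_dim01_fst_zero[OF T E] EE[of i] 4 by simp
  qed
qed

lemma ext_dim01_from_fibre:
  assumes T: "(X, E, sh2 C Y, a, b, c) \<in> dist C" and Y: "Y \<in> Ob C" and V: "V \<in> Ob C"
    and m: "1 \<le> m" "m < n"
    and YV: "\<And>i. ext_dim01 Y V i (1 - int n \<le> i \<and> i \<le> int m - int n \<or> 2 \<le> i \<and> i \<le> int m + 1)"
    and EV: "\<And>i. ext_dim01 E V i (i = 1 - int n \<or> i = 2)"
  shows "ext_dim01 X V i
    (1 - int n \<le> i \<and> i \<le> int (m + 1) - int n \<or> 2 \<le> i \<and> i \<le> int (m + 1) + 1)"
proof -
  define range_m where "range_m j \<longleftrightarrow> 1 - int n \<le> j \<and> j \<le> int m - int n \<or> 2 \<le> j \<and> j \<le> int m + 1" for j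
  have ZV: "ext_dim01 (sh2 C Y) V j b' \<longleftrightarrow> ext_dim01 Y V (j - 2) b'" for j b'
    using ext_dim01_shift_left V Y shO_closed by (simp add: diff_diff_eq)
  have YV': "ext_dim01 Y V j (range_m j)" for j using YV unfolding range_m_def .
  have range_Suc_m: "(1 - int n \<le> i \<and> i \<le> int (m + 1) - int n \<or> 2 \<le> i \<and> i \<le> int (m + 1) + 1)
      \<longleftrightarrow> i = 1 - int n \<or> i = 2 \<or> range_m (i - 1)"
    unfolding range_m_def using m by arith
  consider "i = 1 - int n \<or> i = 2" | "range_m (i - 1)" | "\<not> (i = 1 - int n \<or> i = 2)" "\<not> range_m (i - 1)"
    by blast
  then show ?thesis
  proof cases
    case 1
    then have "\<not> range_m (i - 2)" "\<not> range_m (i - 1)" unfolding range_m_def using m by arith+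
    then have "ext_dim01 (sh2 C Y) V i False" "ext_dim01 (sh2 C Y) V (i + 1) False"
      using ZV YV'[of "i - 2"] YV'[of "i - 1"] by simp_all
    then have "ext_dim01 X V i b' \<longleftrightarrow> ext_dim01 E V i b'" for b'
      using ext_dim01_fst_iff_snd_contra[OF T V] by blast
    then have "ext_dim01 X V i True" using EV[of i] 1 by simp
    moreover have "i = 1 - int n \<or> i = 2 \<or> range_m (i - 1)" using 1 by blast
    ultimately show ?thesis unfolding range_Suc_m by simp
  next
    case 2
    then have "\<not> (i = 1 - int n \<or> i = 2)" "\<not> (i + 1 = 1 - int n \<or> i + 1 = 2)"
      unfolding range_m_def using m by arith+
    then have "ext_dim01 X V i b' \<longleftrightarrow> ext_dim01 Y V (i - 1) b'" for b'
      using ext_dim01_fst_iff_trd_contra[OF T V, of i b'] EV[of i] EV[of "i + 1"] ZV[of "i + 1" b'] by simp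
    then show ?thesis using YV'[of "i - 1"] 2 range_Suc_m by simp
  next
    case 3
    then have "ext_dim01 (sh2 C Y) V (i + 1) False" using ZV YV'[of "i - 1"] by simp
    then have "ext_dim01 X V i False" using ext_dim01_fst_zero_contra[OF T V] EV[of i] 3 by simp
    moreover have "\<not> (i = 1 - int n \<or> i = 2 \<or> range_m (i - 1))" using 3 by blast
    ultimately show ?thesis unfolding range_Suc_m by simp
  qed
qed

end

locale spherical_tower = triangulated_cat +
  fixes E En
  assumes E_Ob: "E \<in> Ob C"
    and ext_dim01_E_E: "ext_dim01 E E i (i = 0 \<or> i = 2)"
    and En_1: "En 1 = E"
    and En_Suc: "1 \<le> (n::nat) \<Longrightarrow> \<exists>a b c. (En (n + 1), E, sh2 C (En n), a, b, c) \<in> dist C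
                                     \<and> b \<noteq> zerom C E (sh2 C (En n))"
begin

lemma En_Ob: "1 \<le> n \<Longrightarrow> En n \<in> Ob C"
proof (induction n rule: nat_induct_at_least)
  case base
  then show ?case using En_1 E_Ob by simp
next
  case (Suc n)
  then show ?case using En_Suc dist_wf by fastforce
qed

lemma ext_dim01_E_En: "1 \<le> n \<Longrightarrow> ext_dim01 E (En n) i (i = 1 - int n \<or> i = 2)"
proof (induction n arbitrary: i rule: nat_induct_at_least)
  case base
  then show ?case using En_1 ext_dim01_E_E by simp
next
  case (Suc n)
  then obtain a b c where "(En (n + 1), E, sh2 C (En n), a, b, c) \<in> dist C"
    and "b \<noteq> zerom C E (sh2 C (En n))" using En_Suc by blast
  then show ?case
    using ext_dim01_to_fibre En_Ob Suc ext_dim01_E_E by simp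
qed

lemma ext_dim01_En_En:
  "\<lbrakk>1 \<le> m; m \<le> n\<rbrakk> \<Longrightarrow>
   ext_dim01 (En m) (En n) i (1 - int n \<le> i \<and> i \<le> int m - int n \<or> 2 \<le> i \<and> i \<le> int m + 1)"
proof (induction m arbitrary: i rule: nat_induct_at_least)
  case base
  have "(1 - int n \<le> i \<and> i \<le> int 1 - int n \<or> 2 \<le> i \<and> i \<le> int 1 + 1) \<longleftrightarrow> i = 1 - int n \<or> i = 2"
    by arith
  then show ?case using ext_dim01_E_En[of n i] En_1 base by simp
next
  case (Suc m)
  then obtain a b c where "(En (m + 1), E, sh2 C (En m), a, b, c) \<in> dist C" using En_Suc by blast
  then show ?case
    using ext_dim01_from_fibre En_Ob ext_dim01_E_En Suc by simp
qed

lemma hdim_E_En: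
  assumes ft: "finite_type C" and n: "1 \<le> n"
  shows "hdim C E (sh2 C (En n)) = 1"
proof -
  have "ext_dim C E (En n) 2 = of_bool (2 = 1 - int n \<or> (2::int) = 2)"
    by (rule ext_dim_eq_of_bool_iff[OF ft E_Ob En_Ob[OF n], THEN iffD2, OF ext_dim01_E_En[OF n]])
  then show ?thesis unfolding ext_dim_def by (simp add: numeral_2_eq_2)
qed

lemma ext_dim_En_En:
  assumes ft: "finite_type C" and m: "1 \<le> m" "m \<le> n"
  shows "ext_dim C (En m) (En n) i =
    of_bool (1 - int n \<le> i \<and> i \<le> int m - int n \<or> 2 \<le> i \<and> i \<le> int m + 1)"
  using m by (intro ext_dim_eq_of_bool_iff[OF ft En_Ob En_Ob, THEN iffD2] ext_dim01_En_En) auto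

end

theorem lemma2p12:
  fixes C :: "('o, 'm, 'k::field) kcat" and E :: 'o and En :: "nat \<Rightarrow> 'o"
  assumes char: "(2::'k) \<noteq> 0"
    and K3: "K3_category C"
    and sph: "spherical C E"
    and E1: "En 1 = E"
    and tri: "\<forall>n\<ge>1. \<exists>a b c. (En (n + 1), E, sh2 C (En n), a, b, c) \<in> dist C
                              \<and> b \<noteq> zerom C E (sh2 C (En n))"
  shows "(\<forall>n\<ge>1. hdim C E (sh2 C (En n)) = 1) \<and>
         (\<forall>m n i. 1 \<le> m \<and> m \<le> n \<longrightarrow>
            ext_dim C (En m) (En n) i =
              (if - int n + 1 \<le> i \<and> i \<le> - int n + int m then 1
               else if 2 \<le> i \<and> i \<le> int m + 1 then 1 else 0))"
proof -
  have ft: "finite_type C" and tr: "triangulated C" using K3 unfolding K3_category_def by auto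
  interpret triangulated_cat C by (rule triangulated_cat.intro[OF tr])
  have "spherical_tower_axioms C E En"
    unfolding spherical_tower_axioms_def
    using sph spherical_ext_dim01[OF ft sph] E1 tri unfolding spherical_def by blast
  then interpret spherical_tower C E En by (intro spherical_tower.intro triangulated_cat.intro tr)
  show ?thesis
  proof (intro conjI allI impI)
    show "hdim C E (sh2 C (En n)) = 1" if "1 \<le> n" for n
      using hdim_E_En[OF ft that] .
    show "ext_dim C (En m) (En n) i =
        (if - int n + 1 \<le> i \<and> i \<le> - int n + int m then 1
         else if 2 \<le> i \<and> i \<le> int m + 1 then 1 else 0)" if "1 \<le> m \<and> m \<le> n" for m n i
      using ext_dim_En_En[OF ft, of m n i] that by (simp add: of_bool_def)
  qed
qed

end
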